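(* Let $s=(s_1,\ldots,s_n)$ be a sequence of positive integers and let $F$ be a nonempty face of the $s$-lecture hall simplex $P_n^s$. Then the local $h^\ast$-polynomial $\ell^\ast(F;z)$ is real-rooted, and hence unimodal.
   Context: $P_n^s=\{x\in\mathbb{R}^n:0\le x_1/s_1\le\cdots\le x_n/s_n\le1\}$. For a lattice $d$-simplex $\Delta=\mathrm{conv}(v^{(0)},\ldots,v^{(d)})\subset\mathbb{R}^n$, $\ell^\ast(\Delta;z)=\sum_{x\in\Pi^\circ_\Delta\cap\mathbb{Z}^{n+1}}z^{x_{n+1}}$, with $\Pi^\circ_\Delta=\{\sum_i\lambda_i(v^{(i)},1):0<\lambda_i<1\}$. A polynomial is real-rooted if all its zeros are real or it is identically zero. *)

theory Defs
  imports "HOL-Analysis.Analysis" "HOL-Computational_Algebra.Polynomial"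
begin

text \<open>The s-lecture hall simplex in R^n. Coordinates are indexed by a finite
  well-ordered type 'n (so n = CARD('n)); the order on 'n gives the order
  x_1, ..., x_n of the coordinates.\<close>
definition lecture_hall_simplex :: "('n::{finite,wellorder} \<Rightarrow> nat) \<Rightarrow> (real^'n::{finite,wellorder}) set" where
  "lecture_hall_simplex s =
     {x. (\<forall>i. 0 \<le> x$i / real (s i) \<and> x$i / real (s i) \<le> 1) \<and>
         (\<forall>i j. i \<le> j \<longrightarrow> x$i / real (s i) \<le> x$j / real (s j))}"

definition vertices_of :: "(real^'n) set \<Rightarrow> (real^'n) set" where
  "vertices_of P = {v. v extreme_point_of P}"

text \<open>Open fundamental parallelepiped of the cone over the simplex with vertex set V,
  in R^n x R (last coordinate = height).\<close>
definition open_parallelepiped :: "(real^'n) set \<Rightarrow> ((real^'n) \<times> real) set" where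
  "open_parallelepiped V =
     {(\<Sum>v\<in>V. l v *\<^sub>R v, \<Sum>v\<in>V. l v) | l. \<forall>v\<in>V. 0 < l v \<and> l v < 1}"

definition lattice_points_open_par :: "(real^'n) set \<Rightarrow> ((real^'n) \<times> real) set" where
  "lattice_points_open_par V =
     {p \<in> open_parallelepiped V. (\<forall>i. fst p $ i \<in> \<int>) \<and> snd p \<in> \<int>}"

definition local_hstar :: "(real^'n) set \<Rightarrow> real poly" where
  "local_hstar \<Delta> =
     (\<Sum>p\<in>lattice_points_open_par (vertices_of \<Delta>). monom 1 (nat \<lfloor>snd p\<rfloor>))"

definition real_rooted :: "real poly \<Rightarrow> bool" where
  "real_rooted p \<longleftrightarrow> p = 0 \<or> (\<forall>z::complex. poly (map_poly complex_of_real p) z = 0 \<longrightarrow> z \<in> \<real>)"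

definition unimodal_poly :: "real poly \<Rightarrow> bool" where
  "unimodal_poly p \<longleftrightarrow> (\<exists>k. (\<forall>i j. i \<le> j \<and> j \<le> k \<longrightarrow> coeff p i \<le> coeff p j) \<and>
                             (\<forall>i j. k \<le> i \<and> i \<le> j \<longrightarrow> coeff p j \<le> coeff p i))"

end

theory Submission
  imports Defs "HOL-Complex_Analysis.Complex_Analysis"
    "HOL-Computational_Algebra.Fundamental_Theorem_Algebra"
begin

text \<open>The lecture hall simplex is the simplex with the affinely independent vertices \<open>0\<close> and
  \<open>v\<^sub>j = (0, ..., 0, s\<^sub>j, ..., s\<^sub>n)\<close>, so a face is spanned by a subset of them. Writing a point
  \<open>x\<close> of the cone over the face through \<open>w\<^sub>i = x\<^sub>i / s\<^sub>i\<close>, the lattice points of the open fundamental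
  parallelepiped are the chains \<open>0 \<le> w\<^sub>1 \<le> ... \<le> w\<^sub>n\<close> that jump by an amount in \<open>(0, 1)\<close> exactly
  at the vertices of the face, with \<open>s\<^sub>i w\<^sub>i\<close> integral; scanning the coordinates in order turns
  the local \<open>h\<^sup>*\<close>-polynomial into a transfer sum. Grouped by the fractional part \<open>g\<close> of the current
  value, one jump acts on the family \<open>P\<^sub>g\<close> by \<open>Q\<^sub>x = \<Sum>\<^sub>g\<^sub>>\<^sub>x P\<^sub>g + z \<Sum>\<^sub>g\<^sub><\<^sub>x P\<^sub>g\<close>, which by
  Savage and Visontai preserves real-rootedness and interlacing; interlacing is expressed by an
  inequality on the upper half-plane and real-rootedness is recovered by the open mapping
  theorem. Finally a real-rooted polynomial with nonnegative coefficients is a product of factors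
  \<open>z + a\<close> with \<open>a \<ge> 0\<close>, and multiplying by such a factor keeps the coefficients unimodal.\<close>

section \<open>Real-rootedness via the upper half-plane\<close>

definition cpoly :: "real poly \<Rightarrow> complex \<Rightarrow> complex" where
  "cpoly p = poly (map_poly complex_of_real p)"

lemma real_rooted_iff_cpoly: "real_rooted p \<longleftrightarrow> p = 0 \<or> (\<forall>z. cpoly p z = 0 \<longrightarrow> z \<in> \<real>)"
  by (simp add: real_rooted_def cpoly_def)

lemma cpoly_0 [simp]: "cpoly 0 z = 0"
  by (simp add: cpoly_def)

lemma cpoly_1 [simp]: "cpoly 1 z = 1"
  by (simp add: cpoly_def)

lemma cpoly_pCons [simp]: "cpoly (pCons a p) z = of_real a + z * cpoly p z"
  by (simp add: cpoly_def map_poly_pCons)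

lemma cpoly_add [simp]: "cpoly (p + q) z = cpoly p z + cpoly q z"
proof -
  have "map_poly complex_of_real (p + q) = map_poly of_real p + map_poly of_real q"
    by (rule poly_eqI) (simp add: coeff_map_poly)
  then show ?thesis by (simp add: cpoly_def)
qed

lemma cpoly_smult [simp]: "cpoly (smult a p) z = of_real a * cpoly p z"
  by (induction p) (simp_all add: algebra_simps)

lemma cpoly_mult [simp]: "cpoly (p * q) z = cpoly p z * cpoly q z"
  by (induction p) (simp_all add: algebra_simps)

lemma cpoly_sum: "cpoly (\<Sum>x\<in>A. f x) z = (\<Sum>x\<in>A. cpoly (f x) z)"
  by (induction A rule: infinite_finite_induct) simp_all

lemma cpoly_of_real [simp]: "cpoly p (of_real x) = of_real (poly p x)"
  by (induction p) simp_all

lemma cpoly_cnj: "cpoly p (cnj z) = cnj (cpoly p z)"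
  unfolding cpoly_def by (rule poly_cnj_real[symmetric]) (simp add: coeff_map_poly)

lemma real_rooted_0 [simp]: "real_rooted 0"
  by (simp add: real_rooted_def)

lemma map_poly_of_real_eq_0_iff [simp]: "map_poly complex_of_real p = 0 \<longleftrightarrow> p = 0"
  by (rule map_poly_eq_0_iff) auto

text \<open>The signed area of the parallelogram spanned by \<open>u\<close> and \<open>v\<close>; it is nonnegative
  iff \<open>v\<close> lies counterclockwise from \<open>u\<close> within a half-turn.\<close>
definition wedge :: "complex \<Rightarrow> complex \<Rightarrow> real" where
  "wedge u v = Im (cnj u * v)"

lemma wedge_add_right: "wedge u (v + v') = wedge u v + wedge u v'"
  by (simp add: wedge_def algebra_simps)

lemma wedge_sum_left: "wedge (\<Sum>x\<in>A. f x) v = (\<Sum>x\<in>A. wedge (f x) v)"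
  and wedge_sum_right: "wedge u (\<Sum>x\<in>A. f x) = (\<Sum>x\<in>A. wedge u (f x))"
  by (induction A rule: infinite_finite_induct) (simp_all add: wedge_def algebra_simps)

lemma wedge_0 [simp]: "wedge 0 v = 0" "wedge u 0 = 0"
  by (simp_all add: wedge_def)

lemma wedge_self [simp]: "wedge u u = 0"
  by (simp add: wedge_def)

lemma wedge_mult_self: "wedge u (z * u) = Im z * (cmod u)\<^sup>2"
  unfolding cmod_power2 by (simp add: wedge_def algebra_simps power2_eq_square)

lemma wedge_mult_self_nonneg: "0 \<le> Im z \<Longrightarrow> 0 \<le> wedge u (z * u)"
  by (simp add: wedge_mult_self)

lemma Im_divide_eq_wedge: "Im (v / u) = wedge u v / (cmod u)\<^sup>2"
  by (simp add: wedge_def Im_divide' algebra_simps)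

text \<open>\<open>v\<close> lies in the closed sector swept counterclockwise from \<open>u\<close> to \<open>z * u\<close>.\<close>
definition in_sector :: "complex \<Rightarrow> complex \<Rightarrow> complex \<Rightarrow> bool" where
  "in_sector z u v \<longleftrightarrow> 0 \<le> wedge u v \<and> 0 \<le> wedge v (z * u)"

definition interlaces :: "real poly \<Rightarrow> real poly \<Rightarrow> bool" where
  "interlaces f g \<longleftrightarrow> (\<forall>z. 0 < Im z \<longrightarrow> in_sector z (cpoly f z) (cpoly g z))"

lemma interlaces_0 [simp]: "interlaces p 0" "interlaces 0 p"
  by (simp_all add: interlaces_def in_sector_def)

lemma in_sector_sum:
  assumes "\<And>x y. x \<in> U \<Longrightarrow> y \<in> V \<Longrightarrow> in_sector z (a x) (a y)"
  shows "in_sector z (\<Sum>x\<in>U. a x) (\<Sum>y\<in>V. a y)"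
  using assms unfolding in_sector_def sum_distrib_left wedge_sum_left wedge_sum_right
  by (auto intro!: sum_nonneg)

text \<open>Otherwise, by the open mapping theorem, \<open>\<phi>\<close> would map a neighbourhood of \<open>w\<close> onto a disc
  around 0, leaving the closed upper half-plane.\<close>
lemma constant_on_if_Im_nonneg_vanishes:
  assumes "\<phi> holomorphic_on S" "open S" "connected S"
    and Im: "\<And>z. z \<in> S \<Longrightarrow> 0 \<le> Im (\<phi> z)" and "w \<in> S" "\<phi> w = 0"
  shows "\<phi> constant_on S"
proof (rule ccontr)
  assume "\<not> \<phi> constant_on S"
  then have "open (\<phi> ` S)"
    using assms(1-3) by (intro open_mapping_thm[of \<phi> S]) auto
  moreover have "0 \<in> \<phi> ` S"
    using assms(5,6) by force
  ultimately obtain e where "0 < e" "ball 0 e \<subseteq> \<phi> ` S"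
    by (meson openE)
  then have "- \<i> * of_real (e / 2) \<in> \<phi> ` S"
    by (auto simp: norm_mult)
  then obtain x where "x \<in> S" "\<phi> x = - \<i> * of_real (e / 2)"
    by (metis imageE)
  then show False
    using Im[of x] \<open>0 < e\<close> by simp
qed

text \<open>Since a nonzero real-rooted \<open>f\<close> has no zeros off the real axis, the hypothesis says that
  \<open>g / f\<close> maps the open upper half-plane into the closed one.\<close>
lemma real_rooted_if_wedge_nonneg:
  assumes f: "f \<noteq> 0" "real_rooted f"
    and wedge: "\<And>z. 0 < Im z \<Longrightarrow> 0 \<le> wedge (cpoly f z) (cpoly g z)"
  shows "real_rooted g"
proof (cases "g = 0")
  case False
  define S where "S = {z. 0 < Im z}"
  have f_nonzero: "cpoly f z \<noteq> 0" if "z \<in> S" for z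
    using f that by (auto simp: real_rooted_iff_cpoly S_def complex_is_Real_iff)
  have no_root: "cpoly g w \<noteq> 0" if "w \<in> S" for w
  proof
    assume root: "cpoly g w = 0"
    define \<phi> where "\<phi> z = cpoly g z / cpoly f z" for z
    have "\<phi> holomorphic_on S"
      unfolding \<phi>_def using f_nonzero by (auto simp: cpoly_def intro!: holomorphic_intros)
    moreover have "0 \<le> Im (\<phi> z)" if "z \<in> S" for z
      using wedge[of z] that by (simp add: \<phi>_def Im_divide_eq_wedge S_def)
    ultimately have "\<phi> constant_on S"
      using \<open>w \<in> S\<close> root
      by (intro constant_on_if_Im_nonneg_vanishes[where w = w])
        (auto simp: S_def \<phi>_def open_halfspace_Im_gt connected_halfspace_Im_gt)
    then obtain c where c: "\<And>z. z \<in> S \<Longrightarrow> \<phi> z = c"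
      by (auto simp: constant_on_def)
    have "c = 0"
      using c[OF \<open>w \<in> S\<close>] root by (simp add: \<phi>_def)
    then have "S \<subseteq> {z. poly (map_poly complex_of_real g) z = 0}"
      using c f_nonzero by (auto simp: \<phi>_def cpoly_def)
    moreover have "finite {z. poly (map_poly complex_of_real g) z = 0}"
      using False by (intro poly_roots_finite) simp
    ultimately show False
      using uncountable_halfspace_Im_gt[of 0] countable_finite finite_subset
      by (auto simp: S_def)
  qed
  have "cpoly g z = 0 \<Longrightarrow> z \<in> \<real>" for z
    using no_root[of z] no_root[of "cnj z"]
    by (cases "Im z" rule: linorder_cases) (auto simp: S_def cpoly_cnj complex_is_Real_iff)
  then show ?thesis
    by (simp add: real_rooted_iff_cpoly)
qed simp

section \<open>The transformation of Savage and Visontai\<close>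

definition rotated_sum :: "real set \<Rightarrow> (real \<Rightarrow> 'a::comm_semiring_1) \<Rightarrow> 'a \<Rightarrow> real \<Rightarrow> 'a" where
  "rotated_sum X a z t = (\<Sum>g\<in>{g\<in>X. t < g}. a g) + z * (\<Sum>g\<in>{g\<in>X. g < t}. a g)"

lemma cpoly_rotated_sum: "cpoly (rotated_sum X P [:0, 1:] t) z = rotated_sum X (\<lambda>g. cpoly (P g) z) z t"
  by (simp add: rotated_sum_def cpoly_sum)

text \<open>In the application \<open>L, F, M, F', H\<close> are the sums over the parts of a set lying below \<open>x\<close>,
  at \<open>x\<close>, strictly between \<open>x\<close> and \<open>y\<close>, at \<open>y\<close> and above \<open>y\<close>: both wedges expand into terms pairing
  parts that lie in the right order, plus terms \<open>wedge u (z * u) \<ge> 0\<close>.\<close>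
lemma in_sector_parts:
  assumes "0 \<le> Im z"
    and "in_sector z L (F + M)" "in_sector z L (M + F')" "in_sector z (F + M) H" "in_sector z (M + F') H"
    and "in_sector z F M" "in_sector z F F'" "in_sector z M F'"
  shows "in_sector z (M + F' + H + z * L) (H + z * (L + F + M))"
proof -
  have expand1: "wedge (M + F' + H + z * L) (H + z * (L + F + M)) =
     wedge H (z * (F + M)) + (cmod z)\<^sup>2 * wedge L (F + M) + wedge (M + F') H + wedge (M + F') (z * L)
     + wedge M (z * F) + wedge M (z * M) + wedge F' (z * F) + wedge F' (z * M)"
    unfolding cmod_power2 by (simp add: wedge_def algebra_simps power2_eq_square)
  have expand2: "wedge (H + z * (L + F + M)) (z * (M + F' + H + z * L)) =
     wedge (H + z * L) (z * (H + z * L)) + wedge H (z * (M + F')) + (cmod z)\<^sup>2 * wedge L (M + F')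
     + (cmod z)\<^sup>2 * (wedge (F + M) H + wedge (F + M) (z * L))
     + (cmod z)\<^sup>2 * (wedge F M + wedge F F' + wedge M F')"
    unfolding cmod_power2 by (simp add: wedge_def algebra_simps power2_eq_square)
  have "0 \<le> wedge (M + F' + H + z * L) (H + z * (L + F + M))"
    unfolding expand1 using assms(2-) wedge_mult_self_nonneg[OF \<open>0 \<le> Im z\<close>, of M]
    unfolding in_sector_def by (intro add_nonneg_nonneg mult_nonneg_nonneg) auto
  moreover have "0 \<le> wedge (H + z * (L + F + M)) (z * (M + F' + H + z * L))"
    unfolding expand2 using assms(2-) wedge_mult_self_nonneg[OF \<open>0 \<le> Im z\<close>, of "H + z * L"]
    unfolding in_sector_def by (intro add_nonneg_nonneg mult_nonneg_nonneg) auto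
  ultimately show ?thesis
    by (simp add: in_sector_def)
qed

lemma in_sector_rotated_sum:
  assumes "finite X" "0 \<le> Im z" "x < y"
    and sector: "\<And>g g'. g \<in> X \<Longrightarrow> g' \<in> X \<Longrightarrow> g < g' \<Longrightarrow> in_sector z (a g) (a g')"
  shows "in_sector z (rotated_sum X a z x) (rotated_sum X a z y)"
proof -
  define S where "S U = (\<Sum>g\<in>U. a g)" for U
  define L H F M F' where "L = {g\<in>X. g < x}" and "H = {g\<in>X. y < g}" and "F = {g\<in>X. g = x}"
    and "M = {g\<in>X. x < g \<and> g < y}" and "F' = {g\<in>X. g = y}"
  note parts = L_def H_def F_def M_def F'_def
  have below: "in_sector z (S U) (S V)"
    if "U \<subseteq> X" "V \<subseteq> X" "\<And>g g'. g \<in> U \<Longrightarrow> g' \<in> V \<Longrightarrow> g < g'" for U V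
    unfolding S_def using that sector by (intro in_sector_sum) blast
  have sum_union: "S (U \<union> V) = S U + S V" if "U \<subseteq> X" "V \<subseteq> X" "U \<inter> V = {}" for U V
    unfolding S_def using that \<open>finite X\<close> by (intro sum.union_disjoint) (auto intro: finite_subset)
  have sub: "L \<subseteq> X" "H \<subseteq> X" "F \<subseteq> X" "M \<subseteq> X" "F' \<subseteq> X"
    by (auto simp: parts)
  have disj: "M \<inter> F' = {}" "(M \<union> F') \<inter> H = {}" "L \<inter> F = {}" "(L \<union> F) \<inter> M = {}"
    "F \<inter> M = {}"
    using \<open>x < y\<close> by (auto simp: parts)
  have "S {g\<in>X. x < g} = S (M \<union> F' \<union> H)"
    using \<open>x < y\<close> by (intro arg_cong[where f = S]) (auto simp: parts)
  also have "\<dots> = S M + S F' + S H"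
    by (simp add: sum_union sub disj)
  finally have above_x: "S {g\<in>X. x < g} = S M + S F' + S H" .
  have "S {g\<in>X. g < y} = S (L \<union> F \<union> M)"
    using \<open>x < y\<close> by (intro arg_cong[where f = S]) (auto simp: parts)
  also have "\<dots> = S L + S F + S M"
    by (simp add: sum_union sub disj)
  finally have below_y: "S {g\<in>X. g < y} = S L + S F + S M" .
  have rx: "rotated_sum X a z x = S M + S F' + S H + z * S L"
    using above_x by (simp add: rotated_sum_def S_def L_def)
  have ry: "rotated_sum X a z y = S H + z * (S L + S F + S M)"
    using below_y by (simp add: rotated_sum_def S_def H_def)
  have FM_split: "S (F \<union> M) = S F + S M" and MF'_split: "S (M \<union> F') = S M + S F'"
    by (simp_all add: sum_union sub disj)
  show ?thesis
    unfolding rx ry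
  proof (rule in_sector_parts[OF \<open>0 \<le> Im z\<close>])
    show "in_sector z (S L) (S F + S M)" "in_sector z (S F + S M) (S H)"
      unfolding FM_split[symmetric] by (rule below; use \<open>x < y\<close> in \<open>auto simp: parts\<close>)+
    show "in_sector z (S L) (S M + S F')" "in_sector z (S M + S F') (S H)"
      unfolding MF'_split[symmetric] by (rule below; use \<open>x < y\<close> in \<open>auto simp: parts\<close>)+
    show "in_sector z (S F) (S M)" "in_sector z (S F) (S F')" "in_sector z (S M) (S F')"
      by (rule below; use \<open>x < y\<close> in \<open>auto simp: parts\<close>)+
  qed
qed

lemma interlaces_rotated_sum:
  assumes "finite X" "x < y"
    and "\<And>g g'. g \<in> X \<Longrightarrow> g' \<in> X \<Longrightarrow> g < g' \<Longrightarrow> interlaces (P g) (P g')"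
  shows "interlaces (rotated_sum X P [:0, 1:] x) (rotated_sum X P [:0, 1:] y)"
  using assms unfolding interlaces_def cpoly_rotated_sum
  by (auto intro!: in_sector_rotated_sum)

lemma wedge_cpoly_rotated_sum:
  "wedge u (cpoly (rotated_sum X P [:0, 1:] x) z) =
    (\<Sum>g\<in>{g\<in>X. x < g}. wedge u (cpoly (P g) z)) + (\<Sum>g\<in>{g\<in>X. g < x}. wedge u (z * cpoly (P g) z))"
  unfolding cpoly_rotated_sum
  unfolding rotated_sum_def wedge_add_right sum_distrib_left wedge_sum_right ..

context
  fixes X :: "real set" and P :: "real \<Rightarrow> real poly"
  assumes finite: "finite X"
    and real_rooted: "\<And>g. g \<in> X \<Longrightarrow> real_rooted (P g)"
    and interlacing: "\<And>g g'. g \<in> X \<Longrightarrow> g' \<in> X \<Longrightarrow> g < g' \<Longrightarrow> interlaces (P g) (P g')"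
begin

lemma in_sector_cpoly:
  "0 < Im z \<Longrightarrow> g \<in> X \<Longrightarrow> g' \<in> X \<Longrightarrow> g < g' \<Longrightarrow> in_sector z (cpoly (P g) z) (cpoly (P g') z)"
  using interlacing by (simp add: interlaces_def)

text \<open>Compare with the first nonzero \<open>P g\<close> above \<open>x\<close>.\<close>
lemma real_rooted_rotated_sum_above:
  assumes "\<exists>g\<in>X. x < g \<and> P g \<noteq> 0"
  shows "real_rooted (rotated_sum X P [:0, 1:] x)"
proof -
  define g\<^sub>0 where "g\<^sub>0 = Min {g\<in>X. x < g \<and> P g \<noteq> 0}"
  have g\<^sub>0: "g\<^sub>0 \<in> X" "x < g\<^sub>0" "P g\<^sub>0 \<noteq> 0"
    and least: "\<And>g. g \<in> X \<Longrightarrow> x < g \<Longrightarrow> g < g\<^sub>0 \<Longrightarrow> P g = 0"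
    using Min_in[of "{g\<in>X. x < g \<and> P g \<noteq> 0}"] Min_le[of "{g\<in>X. x < g \<and> P g \<noteq> 0}"]
      assms finite unfolding g\<^sub>0_def by fastforce+
  show ?thesis
  proof (rule real_rooted_if_wedge_nonneg[of "P g\<^sub>0"])
    fix z :: complex assume "0 < Im z"
    have "0 \<le> wedge (cpoly (P g\<^sub>0) z) (cpoly (P g) z)" if "g \<in> X" "x < g" for g
      using least[OF that] in_sector_cpoly[OF \<open>0 < Im z\<close> g\<^sub>0(1) that(1)]
      by (cases g g\<^sub>0 rule: linorder_cases) (auto simp: in_sector_def)
    moreover have "0 \<le> wedge (cpoly (P g\<^sub>0) z) (z * cpoly (P g) z)" if "g \<in> X" "g < x" for g
      using in_sector_cpoly[OF \<open>0 < Im z\<close> that(1) g\<^sub>0(1)] that g\<^sub>0 by (simp add: in_sector_def)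
    ultimately show "0 \<le> wedge (cpoly (P g\<^sub>0) z) (cpoly (rotated_sum X P [:0, 1:] x) z)"
      unfolding wedge_cpoly_rotated_sum by (auto intro!: add_nonneg_nonneg sum_nonneg)
  qed (use g\<^sub>0 real_rooted in auto)
qed

text \<open>Compare with the last nonzero \<open>P g\<close> below \<open>x\<close>.\<close>
lemma real_rooted_rotated_sum_below:
  assumes "\<forall>g\<in>X. x < g \<longrightarrow> P g = 0" "\<exists>g\<in>X. g < x \<and> P g \<noteq> 0"
  shows "real_rooted (rotated_sum X P [:0, 1:] x)"
proof -
  define g\<^sub>0 where "g\<^sub>0 = Max {g\<in>X. g < x \<and> P g \<noteq> 0}"
  have g\<^sub>0: "g\<^sub>0 \<in> X" "g\<^sub>0 < x" "P g\<^sub>0 \<noteq> 0"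
    and greatest: "\<And>g. g \<in> X \<Longrightarrow> g < x \<Longrightarrow> g\<^sub>0 < g \<Longrightarrow> P g = 0"
    using Max_in[of "{g\<in>X. g < x \<and> P g \<noteq> 0}"] Max_ge[of "{g\<in>X. g < x \<and> P g \<noteq> 0}"]
      assms(2) finite unfolding g\<^sub>0_def by fastforce+
  show ?thesis
  proof (rule real_rooted_if_wedge_nonneg[of "P g\<^sub>0"])
    fix z :: complex assume "0 < Im z"
    have "0 \<le> wedge (cpoly (P g\<^sub>0) z) (z * cpoly (P g) z)" if "g \<in> X" "g < x" for g
      using greatest[OF that] in_sector_cpoly[OF \<open>0 < Im z\<close> that(1) g\<^sub>0(1)]
        wedge_mult_self_nonneg[of z "cpoly (P g\<^sub>0) z"] \<open>0 < Im z\<close>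
      by (cases g g\<^sub>0 rule: linorder_cases) (auto simp: in_sector_def)
    then show "0 \<le> wedge (cpoly (P g\<^sub>0) z) (cpoly (rotated_sum X P [:0, 1:] x) z)"
      unfolding wedge_cpoly_rotated_sum using assms(1) by (auto intro!: add_nonneg_nonneg sum_nonneg)
  qed (use g\<^sub>0 real_rooted in auto)
qed

lemma real_rooted_rotated_sum: "real_rooted (rotated_sum X P [:0, 1:] x)"
proof -
  consider "\<exists>g\<in>X. x < g \<and> P g \<noteq> 0"
    | "\<forall>g\<in>X. x < g \<longrightarrow> P g = 0" "\<exists>g\<in>X. g < x \<and> P g \<noteq> 0"
    | "\<forall>g\<in>X. g \<noteq> x \<longrightarrow> P g = 0"
    by (meson linorder_neqE_linordered_idom)
  then show ?thesis
  proof cases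
    case 3
    then have "rotated_sum X P [:0, 1:] x = 0"
      by (auto simp: rotated_sum_def intro!: sum.neutral)
    then show ?thesis
      by simp
  qed (blast intro: real_rooted_rotated_sum_above real_rooted_rotated_sum_below)+
qed

end

section \<open>Chain polynomials\<close>

text \<open>\<open>chain_poly apex ds w\<close> sums over the chains \<open>w = w\<^sub>0, w\<^sub>1, ..., w\<^sub>m\<close> with
  \<open>w\<^sub>k\<^sub>+\<^sub>1 \<in> successors s b w\<^sub>k\<close> for the \<open>k\<close>-th entry \<open>(s, b)\<close> of \<open>ds\<close> the monomial \<open>z\<^sup>h\<close>, where
  the integer \<open>h\<close> is the height of the corresponding lattice point: \<open>w\<^sub>m < h < w\<^sub>m + 1\<close> if the
  face contains the vertex \<open>0\<close> (\<open>apex\<close>) and \<open>h = w\<^sub>m\<close> otherwise.\<close>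

definition successors :: "nat \<Rightarrow> bool \<Rightarrow> real \<Rightarrow> real set" where
  "successors s b w = {w'. (if b then w < w' \<and> w' < w + 1 else w' = w) \<and> real s * w' \<in> \<int>}"

definition height_monom :: "bool \<Rightarrow> real \<Rightarrow> real poly" where
  "height_monom apex w =
     (if apex then (if w \<in> \<int> then 0 else monom 1 (nat \<lfloor>w\<rfloor> + 1))
      else (if w \<in> \<int> then monom 1 (nat \<lfloor>w\<rfloor>) else 0))"

fun chain_poly :: "bool \<Rightarrow> (nat \<times> bool) list \<Rightarrow> real \<Rightarrow> real poly" where
  "chain_poly apex [] w = height_monom apex w"
| "chain_poly apex ((s, b) # ds) w = (\<Sum>w'\<in>successors s b w. chain_poly apex ds w')"

lemma finite_successors:
  assumes "0 < s"
  shows "finite (successors s b w)"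
proof (rule finite_subset)
  show "successors s b w \<subseteq> (\<lambda>k. of_int k / real s) ` {\<lfloor>real s * w\<rfloor>..\<lceil>real s * (w + 1)\<rceil>}"
  proof
    fix w' assume w': "w' \<in> successors s b w"
    then obtain k where k: "real s * w' = of_int k"
      by (auto simp: successors_def elim!: Ints_cases)
    have "real s * w \<le> real s * w'" "real s * w' \<le> real s * (w + 1)"
      using w' by (auto simp: successors_def split: if_splits intro!: mult_left_mono)
    then have "k \<in> {\<lfloor>real s * w\<rfloor>..\<lceil>real s * (w + 1)\<rceil>}"
      using k by (simp add: floor_le_iff le_ceiling_iff)
    moreover have "w' = of_int k / real s"
      using k assms by (simp add: field_simps)
    ultimately show "w' \<in> (\<lambda>k. of_int k / real s) ` {\<lfloor>real s * w\<rfloor>..\<lceil>real s * (w + 1)\<rceil>}"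
      by blast
  qed
qed simp

lemma Ints_mult_of_nat_add_1_iff: "real s * (w + 1) \<in> \<int> \<longleftrightarrow> real s * w \<in> \<int>"
proof -
  have "real s * (w + 1) = real s * w + of_nat s"
    by (simp add: algebra_simps)
  then show ?thesis
    by (metis Ints_add Ints_diff Ints_of_nat add_diff_cancel_right')
qed

lemma successors_add_1: "successors s b (w + 1) = (\<lambda>x. x + 1) ` successors s b w"
proof -
  have "successors s b (w + 1) = (\<lambda>x. x + 1) ` (\<lambda>x. x - 1) ` successors s b (w + 1)"
    by (simp add: image_image)
  also have "(\<lambda>x. x - 1) ` successors s b (w + 1) = successors s b w"
    using Ints_mult_of_nat_add_1_iff[of s]
    by (force simp: successors_def split: if_splits intro: rev_image_eqI[of "_ + 1"])
  finally show ?thesis .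
qed

lemma successors_ge: "w' \<in> successors s b w \<Longrightarrow> w \<le> w'"
  by (auto simp: successors_def split: if_splits)

lemma Ints_add_1_iff: "(w::real) + 1 \<in> \<int> \<longleftrightarrow> w \<in> \<int>"
  by (metis Ints_1 Ints_add Ints_diff add_diff_cancel_right')

lemma height_monom_add_1:
  assumes "0 \<le> w"
  shows "height_monom apex (w + 1) = [:0, 1:] * height_monom apex w"
proof -
  have "nat \<lfloor>w + 1\<rfloor> = Suc (nat \<lfloor>w\<rfloor>)"
    using assms by (simp add: nat_add_distrib)
  then show ?thesis
    by (simp add: height_monom_def Ints_add_1_iff monom_Suc)
qed

lemma chain_poly_add_1:
  "0 \<le> w \<Longrightarrow> chain_poly apex ds (w + 1) = [:0, 1:] * chain_poly apex ds w"
proof (induction ds arbitrary: w)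
  case Nil
  then show ?case by (simp add: height_monom_add_1)
next
  case (Cons d ds)
  obtain s b where d: "d = (s, b)" by (cases d)
  have "chain_poly apex (d # ds) (w + 1) = (\<Sum>w'\<in>successors s b w. chain_poly apex ds (w' + 1))"
    by (simp add: d successors_add_1 sum.reindex)
  also have "\<dots> = (\<Sum>w'\<in>successors s b w. [:0, 1:] * chain_poly apex ds w')"
    by (intro sum.cong refl Cons.IH) (meson Cons.prems successors_ge order_trans)
  finally show ?case
    by (simp add: d sum_distrib_left)
qed

definition unit_grid :: "nat \<Rightarrow> real set" where
  "unit_grid s = {g. 0 \<le> g \<and> g < 1 \<and> real s * g \<in> \<int>}"

lemma finite_unit_grid:
  assumes "0 < s"
  shows "finite (unit_grid s)"
proof -
  have "unit_grid s \<subseteq> insert 0 (successors s True 0)"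
    by (auto simp: unit_grid_def successors_def)
  then show ?thesis
    by (meson assms finite_insert finite_subset finite_successors)
qed

lemma successors_True_unit_interval:
  assumes "0 \<le> x" "x < 1"
  shows "successors s True x = {g\<in>unit_grid s. x < g} \<union> (\<lambda>g. g + 1) ` {g\<in>unit_grid s. g < x}"
proof -
  have "y \<in> successors s True x \<longleftrightarrow> y \<in> {g\<in>unit_grid s. x < g} \<or> y - 1 \<in> {g\<in>unit_grid s. g < x}" for y
    using assms Ints_mult_of_nat_add_1_iff[of s "y - 1"]
    by (cases "y < 1") (auto simp: successors_def unit_grid_def)
  moreover have "y \<in> (\<lambda>g. g + 1) ` S \<longleftrightarrow> y - 1 \<in> S" for y and S :: "real set"
    by force
  ultimately show ?thesis
    by blast
qed

lemma chain_poly_Cons_True: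
  assumes "0 \<le> x" "x < 1" "0 < s"
  shows "chain_poly apex ((s, True) # ds) x = rotated_sum (unit_grid s) (chain_poly apex ds) [:0, 1:] x"
proof -
  have disjoint: "{g\<in>unit_grid s. x < g} \<inter> (\<lambda>g. g + 1) ` {g\<in>unit_grid s. g < x} = {}"
    by (auto simp: unit_grid_def)
  have "chain_poly apex ((s, True) # ds) x =
      (\<Sum>g\<in>{g\<in>unit_grid s. x < g}. chain_poly apex ds g) +
      (\<Sum>g\<in>{g\<in>unit_grid s. g < x}. chain_poly apex ds (g + 1))"
    using assms disjoint finite_unit_grid[OF \<open>0 < s\<close>]
    by (simp add: successors_True_unit_interval sum.union_disjoint sum.reindex)
  also have "(\<Sum>g\<in>{g\<in>unit_grid s. g < x}. chain_poly apex ds (g + 1)) =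
      [:0, 1:] * (\<Sum>g\<in>{g\<in>unit_grid s. g < x}. chain_poly apex ds g)"
    unfolding sum_distrib_left by (intro sum.cong refl chain_poly_add_1) (simp add: unit_grid_def)
  finally show ?thesis
    by (simp add: rotated_sum_def)
qed

lemma chain_poly_Cons_False:
  "chain_poly apex ((s, False) # ds) x = (if real s * x \<in> \<int> then chain_poly apex ds x else 0)"
proof -
  have "successors s False x = (if real s * x \<in> \<int> then {x} else {})"
    by (auto simp: successors_def)
  then show ?thesis by simp
qed

definition interlacing_family :: "(real \<Rightarrow> real poly) \<Rightarrow> bool" where
  "interlacing_family P \<longleftrightarrow> (\<forall>x. 0 \<le> x \<and> x < 1 \<longrightarrow> real_rooted (P x)) \<and>
     (\<forall>x y. 0 \<le> x \<and> x < y \<and> y < 1 \<longrightarrow> interlaces (P x) (P y))"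

lemma interlacing_family_height_monom: "interlacing_family (height_monom apex)"
proof -
  have Ints_unit: "x \<in> \<int> \<longleftrightarrow> x = 0" if "0 \<le> x" "x < 1" for x :: real
    using that by (auto elim!: Ints_cases)
  have height_monom_unit: "height_monom apex x =
      (if apex then (if x = 0 then 0 else [:0, 1:]) else (if x = 0 then 1 else 0))"
    if "0 \<le> x" "x < 1" for x
    using that Ints_unit[OF that] by (simp add: height_monom_def monom_Suc)
  have "real_rooted 1" "real_rooted [:0, 1:]"
    by (auto simp: real_rooted_iff_cpoly)
  moreover have "interlaces [:0, 1:] [:0, 1:]"
    by (simp add: interlaces_def in_sector_def wedge_mult_self_nonneg)
  ultimately show ?thesis
    unfolding interlacing_family_def by (auto simp: height_monom_unit)
qed

lemma interlacing_family_chain_poly: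
  "\<forall>d\<in>set ds. 0 < fst d \<Longrightarrow> interlacing_family (chain_poly apex ds)"
proof (induction ds)
  case Nil
  then show ?case by (simp add: interlacing_family_height_monom)
next
  case (Cons d ds)
  obtain s b where d: "d = (s, b)" by (cases d)
  have "0 < s" and IH: "interlacing_family (chain_poly apex ds)"
    using Cons by (auto simp: d)
  show ?case
  proof (cases b)
    case True
    then have d: "d = (s, True)"
      using d by simp
    have grid: "0 \<le> g \<and> g < 1" if "g \<in> unit_grid s" for g
      using that by (simp add: unit_grid_def)
    have IH_real_rooted: "real_rooted (chain_poly apex ds g)" if "g \<in> unit_grid s" for g
      using IH grid[OF that] by (simp add: interlacing_family_def)
    have IH_interlaces: "interlaces (chain_poly apex ds g) (chain_poly apex ds g')"
      if "g \<in> unit_grid s" "g' \<in> unit_grid s" "g < g'" for g g'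
      using IH grid[OF that(1)] grid[OF that(2)] that(3) by (simp add: interlacing_family_def)
    show ?thesis
      unfolding interlacing_family_def
    proof (intro conjI allI impI; elim conjE)
      fix x :: real assume "0 \<le> x" "x < 1"
      show "real_rooted (chain_poly apex (d # ds) x)"
        unfolding d chain_poly_Cons_True[OF \<open>0 \<le> x\<close> \<open>x < 1\<close> \<open>0 < s\<close>]
        by (intro real_rooted_rotated_sum finite_unit_grid \<open>0 < s\<close> IH_real_rooted IH_interlaces)
    next
      fix x y :: real assume "0 \<le> x" "x < y" "y < 1"
      then have "x < 1" "0 \<le> y"
        by linarith+
      show "interlaces (chain_poly apex (d # ds) x) (chain_poly apex (d # ds) y)"
        unfolding d chain_poly_Cons_True[OF \<open>0 \<le> x\<close> \<open>x < 1\<close> \<open>0 < s\<close>]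
          chain_poly_Cons_True[OF \<open>0 \<le> y\<close> \<open>y < 1\<close> \<open>0 < s\<close>]
        by (intro interlaces_rotated_sum finite_unit_grid \<open>0 < s\<close> \<open>x < y\<close> IH_interlaces)
    qed
  next
    case False
    then show ?thesis
      using IH by (simp add: d interlacing_family_def chain_poly_Cons_False del: chain_poly.simps)
  qed
qed

lemma real_rooted_chain_poly: "\<forall>d\<in>set ds. 0 < fst d \<Longrightarrow> real_rooted (chain_poly apex ds 0)"
  using interlacing_family_chain_poly[of ds apex] by (simp add: interlacing_family_def)

section \<open>Unimodality\<close>

definition unimodal_at :: "(nat \<Rightarrow> real) \<Rightarrow> nat \<Rightarrow> bool" where
  "unimodal_at c k \<longleftrightarrow> (\<forall>i j. i \<le> j \<and> j \<le> k \<longrightarrow> c i \<le> c j) \<and> (\<forall>i j. k \<le> i \<and> i \<le> j \<longrightarrow> c j \<le> c i)"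

lemma unimodal_poly_iff_unimodal_at: "unimodal_poly p \<longleftrightarrow> (\<exists>k. unimodal_at (coeff p) k)"
  by (simp add: unimodal_poly_def unimodal_at_def)

text \<open>The peak of the sum is at \<open>k\<close> or at \<open>Suc k\<close>, whichever carries the larger value.\<close>
lemma unimodal_at_add_Suc:
  assumes f: "unimodal_at f k" and g: "unimodal_at g (Suc k)"
  shows "\<exists>k'. unimodal_at (\<lambda>j. f j + g j) k'"
proof (cases "f k + g k \<le> f (Suc k) + g (Suc k)")
  case True
  have "f i + g i \<le> f j + g j" if "i \<le> j" "j \<le> Suc k" for i j
  proof (cases "j \<le> k")
    case True
    then show ?thesis using f g that unfolding unimodal_at_def by (meson add_mono le_SucI)
  next
    case False
    then have "j = Suc k" using that by simp
    moreover have "f i + g i \<le> f k + g k" if "i \<le> k"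
      using f g that unfolding unimodal_at_def by (meson add_mono le_Suc_eq order_refl)
    ultimately show ?thesis
      using \<open>f k + g k \<le> f (Suc k) + g (Suc k)\<close> \<open>i \<le> j\<close> by (cases "i \<le> k") (auto simp: le_Suc_eq)
  qed
  moreover have "f j + g j \<le> f i + g i" if "Suc k \<le> i" "i \<le> j" for i j
    using f g that unfolding unimodal_at_def by (meson add_mono Suc_leD)
  ultimately show ?thesis
    unfolding unimodal_at_def by blast
next
  case False
  have "f i + g i \<le> f j + g j" if "i \<le> j" "j \<le> k" for i j
    using f g that unfolding unimodal_at_def by (meson add_mono le_SucI)
  moreover have "f j + g j \<le> f i + g i" if "k \<le> i" "i \<le> j" for i j
  proof (cases "Suc k \<le> i")
    case True
    then show ?thesis using f g that unfolding unimodal_at_def by (meson add_mono Suc_leD)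
  next
    case False
    then have "i = k" using that by simp
    moreover have "f j + g j \<le> f (Suc k) + g (Suc k)" if "Suc k \<le> j"
      using f g that unfolding unimodal_at_def by (meson add_mono order_refl Suc_leD)
    ultimately show ?thesis
      using \<open>\<not> f k + g k \<le> f (Suc k) + g (Suc k)\<close> \<open>k \<le> i\<close> \<open>i \<le> j\<close>
      by (cases "j = k") auto
  qed
  ultimately show ?thesis
    unfolding unimodal_at_def by blast
qed

lemma unimodal_at_mult:
  "0 \<le> a \<Longrightarrow> unimodal_at f k \<Longrightarrow> unimodal_at (\<lambda>j. a * f j) k"
  by (simp add: unimodal_at_def mult_left_mono)

lemma unimodal_at_pCons_0:
  assumes "unimodal_at (coeff q) k" "\<And>j. 0 \<le> coeff q j"
  shows "unimodal_at (coeff (pCons 0 q)) (Suc k)"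
  using assms unfolding unimodal_at_def
  by (auto simp: coeff_pCons split: nat.split)

lemma linear_factor_mult: "[:a, 1:] * q = smult a q + pCons 0 (q :: real poly)"
  by (subst mult_pCons_left) simp

lemma unimodal_linear_mult:
  assumes "0 \<le> a" "unimodal_poly q" "\<And>j. 0 \<le> coeff q j"
  shows "unimodal_poly ([:a, 1:] * q)"
proof -
  obtain k where "unimodal_at (coeff q) k"
    using assms(2) by (auto simp: unimodal_poly_iff_unimodal_at)
  then have "\<exists>k'. unimodal_at (\<lambda>j. a * coeff q j + coeff (pCons 0 q) j) k'"
    using assms by (intro unimodal_at_add_Suc unimodal_at_mult unimodal_at_pCons_0)
  moreover have "coeff ([:a, 1:] * q) = (\<lambda>j. a * coeff q j + coeff (pCons 0 q) j)"
    by (simp add: linear_factor_mult fun_eq_iff)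
  ultimately show ?thesis
    by (simp add: unimodal_poly_iff_unimodal_at)
qed

lemma prod_linear_factors_unimodal:
  assumes "\<forall>r\<in>set rs. r \<le> 0"
  shows "unimodal_poly (\<Prod>r\<leftarrow>rs. [:-r, 1:]) \<and> (\<forall>j. 0 \<le> coeff (\<Prod>r\<leftarrow>rs. [:-r, 1:]) j)"
  using assms
proof (induction rs)
  case Nil
  have "unimodal_at (coeff 1) 0"
    by (simp add: unimodal_at_def coeff_1)
  then show ?case
    by (auto simp: unimodal_poly_iff_unimodal_at coeff_1)
next
  case (Cons r rs)
  let ?q = "\<Prod>r\<leftarrow>rs. [:-r, 1:]"
  have "0 \<le> - r" "unimodal_poly ?q" "\<forall>j. 0 \<le> coeff ?q j"
    using Cons by auto
  moreover have "0 \<le> coeff ([:-r, 1:] * ?q) j" for j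
    using calculation unfolding linear_factor_mult coeff_add coeff_smult
    by (intro add_nonneg_nonneg mult_nonneg_nonneg) (auto simp: coeff_pCons split: nat.split)
  ultimately show ?case
    unfolding list.map prod_list.Cons by (blast intro: unimodal_linear_mult)
qed

lemma real_rooted_factorization:
  assumes "real_rooted p" "p \<noteq> 0"
  shows "\<exists>rs. p = smult (lead_coeff p) (\<Prod>r\<leftarrow>rs. [:-r, 1:])"
  using assms
proof (induction "degree p" arbitrary: p rule: less_induct)
  case less
  show ?case
  proof (cases "degree p = 0")
    case True
    then have "p = smult (lead_coeff p) (\<Prod>r\<leftarrow>[]. [:-r, 1:])"
      by (metis degree_0_id list.map(1) prod_list.Nil smult_one)
    then show ?thesis ..
  next
    case False
    then obtain w where w: "cpoly p w = 0"
      using fundamental_theorem_of_algebra[of "map_poly complex_of_real p"]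
      by (auto simp: constant_degree degree_map_poly cpoly_def)
    then obtain r where r: "w = of_real r"
      using less.prems by (auto simp: real_rooted_iff_cpoly elim!: Reals_cases)
    then have "[:-r, 1:] dvd p"
      using w by (simp add: poly_eq_0_iff_dvd)
    then obtain q where q: "p = [:-r, 1:] * q" ..
    with less.prems have "q \<noteq> 0" by auto
    then have "degree p = Suc (degree q)"
      unfolding q by (subst degree_mult_eq) auto
    then have "degree q < degree p"
      by simp
    moreover have "real_rooted q"
    proof -
      have "cpoly p z = cpoly [:-r, 1:] z * cpoly q z" for z
        unfolding q by (rule cpoly_mult)
      then show ?thesis
        using less.prems by (auto simp: real_rooted_iff_cpoly)
    qed
    ultimately obtain rs where "q = smult (lead_coeff q) (\<Prod>r\<leftarrow>rs. [:-r, 1:])"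
      using less.hyps \<open>q \<noteq> 0\<close> by blast
    then have "p = smult (lead_coeff q) ([:-r, 1:] * (\<Prod>r\<leftarrow>rs. [:-r, 1:]))"
      unfolding q by (metis mult_smult_right)
    also have "lead_coeff q = lead_coeff p"
      unfolding q lead_coeff_mult by simp
    finally have "p = smult (lead_coeff p) (\<Prod>r\<leftarrow>r # rs. [:-r, 1:])"
      by (metis list.map(2) prod_list.Cons)
    then show ?thesis ..
  qed
qed

lemma poly_pos_if_nonneg_coeffs:
  fixes p :: "real poly"
  assumes "p \<noteq> 0" "\<And>i. 0 \<le> coeff p i" "0 < t"
  shows "0 < poly p t"
  using assms
proof (induction p)
  case (pCons a p)
  have "0 \<le> a" "\<And>i. 0 \<le> coeff p i"
    using pCons.prems(2)[of 0] pCons.prems(2)[of "Suc _"] by simp_all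
  then show ?case
    using pCons by (cases "p = 0") (auto intro: add_nonneg_pos)
qed simp

theorem real_rooted_nonneg_coeffs_imp_unimodal:
  assumes "real_rooted p" "\<And>i. 0 \<le> coeff p i"
  shows "unimodal_poly p"
proof (cases "p = 0")
  case True
  then show ?thesis by (simp add: unimodal_poly_def)
next
  case False
  obtain rs where p: "p = smult (lead_coeff p) (\<Prod>r\<leftarrow>rs. [:-r, 1:])"
    using real_rooted_factorization[OF assms(1) False] ..
  have nonpos: "\<forall>r\<in>set rs. r \<le> 0"
  proof
    fix r assume "r \<in> set rs"
    show "r \<le> 0"
    proof (rule ccontr)
      assume "\<not> r \<le> 0"
      then have "0 < poly p r"
        by (intro poly_pos_if_nonneg_coeffs[OF False assms(2)]) simp
      moreover have "poly (\<Prod>r\<leftarrow>rs. [:-r, 1:]) r = 0"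
        using \<open>r \<in> set rs\<close> by (induction rs) auto
      then have "poly p r = 0"
        by (subst p) simp
      ultimately show False
        by simp
    qed
  qed
  obtain k where "unimodal_at (coeff (\<Prod>r\<leftarrow>rs. [:-r, 1:])) k"
    using prod_linear_factors_unimodal[OF nonpos] unfolding unimodal_poly_iff_unimodal_at by blast
  then have "unimodal_at (\<lambda>j. lead_coeff p * coeff (\<Prod>r\<leftarrow>rs. [:-r, 1:]) j) k"
    using assms(2) by (intro unimodal_at_mult) simp
  also have "(\<lambda>j. lead_coeff p * coeff (\<Prod>r\<leftarrow>rs. [:-r, 1:]) j) = coeff p"
    by (subst (2) p) (simp add: fun_eq_iff)
  finally show ?thesis
    unfolding unimodal_poly_iff_unimodal_at ..
qed

section \<open>Lattice points as chains\<close>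

text \<open>\<open>\<mu> j\<close> is the coefficient of the vertex \<open>v\<^sub>j\<close> of a point of the open parallelepiped, and
  \<open>w + \<Sum>\<^sub>j\<^sub>\<le>\<^sub>i \<mu> j\<close> is its \<open>i\<close>-th coordinate divided by \<open>s i\<close>. Restricting to the indices in \<open>A\<close> lets the
  induction peel off the least index, one chain step at a time.\<close>

definition unit_increments :: "'a set \<Rightarrow> ('a \<Rightarrow> real) set" where
  "unit_increments J = {\<mu>. \<forall>j. if j \<in> J then 0 < \<mu> j \<and> \<mu> j < 1 else \<mu> j = 0}"

definition lattice_increments :: "('a::linorder \<Rightarrow> nat) \<Rightarrow> 'a set \<Rightarrow> 'a set \<Rightarrow> real \<Rightarrow> ('a \<Rightarrow> real) set" where
  "lattice_increments s J A w =
     {\<mu> \<in> unit_increments (A \<inter> J). \<forall>i\<in>A. real (s i) * (w + (\<Sum>j\<in>{j\<in>A. j \<le> i}. \<mu> j)) \<in> \<int>}"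

lemma lattice_increments_empty: "lattice_increments s J {} w = {\<lambda>_. 0}"
  by (auto simp: lattice_increments_def unit_increments_def)

lemma sum_le_insert_min:
  fixes b :: "'a::linorder"
  assumes "finite A" "\<forall>a\<in>A. b < a" "b \<le> i"
  shows "(\<Sum>j\<in>{j\<in>insert b A. j \<le> i}. f j) = f b + (\<Sum>j\<in>{j\<in>A. j \<le> i}. f j)"
proof -
  have "b \<notin> A"
    using assms(2) by blast
  moreover have "{j\<in>insert b A. j \<le> i} = insert b {j\<in>A. j \<le> i}"
    using assms(3) by auto
  ultimately show ?thesis
    using assms(1) by simp
qed

lemma sorted_list_of_set_insert_min:
  assumes "finite A" "\<forall>a\<in>A. b < a"
  shows "sorted_list_of_set (insert b A) = b # sorted_list_of_set A"
proof -
  have "Min (insert b A) = b" "b \<notin> A"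
    using assms by (auto intro!: Min_eqI intro: less_imp_le)
  then show ?thesis
    using assms(1) by (simp add: sorted_list_of_set_nonempty)
qed

context
  fixes A :: "'a::linorder set" and b :: 'a
  assumes finite: "finite A" and least: "\<forall>a\<in>A. b < a"
begin

lemma sum_le_insert_min_self: "(\<Sum>j\<in>{j\<in>insert b A. j \<le> b}. f j) = f b"
proof -
  have "{j\<in>insert b A. j \<le> b} = {b}"
    using least by (auto dest: leD)
  then show ?thesis
    by simp
qed

lemma lattice_increments_insert_minD:
  assumes \<mu>: "\<mu> \<in> lattice_increments s J (insert b A) w"
  shows "w + \<mu> b \<in> successors (s b) (b \<in> J) w" "\<mu>(b := 0) \<in> lattice_increments s J A (w + \<mu> b)"
proof -
  have "b \<notin> A"
    using least by blast
  have "real (s b) * (w + \<mu> b) \<in> \<int>"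
    using \<mu> sum_le_insert_min_self[of \<mu>] by (simp add: lattice_increments_def)
  then show "w + \<mu> b \<in> successors (s b) (b \<in> J) w"
    using \<mu> by (auto simp: successors_def lattice_increments_def unit_increments_def
        split: if_splits dest: spec[of _ b])
  have "\<mu>(b := 0) \<in> unit_increments (A \<inter> J)"
    using \<mu> \<open>b \<notin> A\<close> by (auto simp: lattice_increments_def unit_increments_def)
  moreover have "real (s i) * (w + \<mu> b + (\<Sum>j\<in>{j\<in>A. j \<le> i}. (\<mu>(b := 0)) j)) \<in> \<int>" if "i \<in> A" for i
  proof -
    have "(\<Sum>j\<in>{j\<in>A. j \<le> i}. (\<mu>(b := 0)) j) = (\<Sum>j\<in>{j\<in>A. j \<le> i}. \<mu> j)"
      using \<open>b \<notin> A\<close> by (intro sum.cong) auto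
    then show ?thesis
      using \<mu> that sum_le_insert_min[OF finite least, of i \<mu>] least
      by (auto simp: lattice_increments_def add.assoc less_imp_le)
  qed
  ultimately show "\<mu>(b := 0) \<in> lattice_increments s J A (w + \<mu> b)"
    by (simp add: lattice_increments_def)
qed

lemma lattice_increments_insert_minI:
  assumes w': "w' \<in> successors (s b) (b \<in> J) w" and \<mu>: "\<mu> \<in> lattice_increments s J A w'"
  shows "\<mu>(b := w' - w) \<in> lattice_increments s J (insert b A) w"
proof -
  have "b \<notin> A"
    using least by blast
  have "\<mu>(b := w' - w) \<in> unit_increments (insert b A \<inter> J)"
    using w' \<mu> \<open>b \<notin> A\<close>
    by (auto simp: successors_def lattice_increments_def unit_increments_def split: if_splits)
  moreover have "real (s i) * (w + (\<Sum>j\<in>{j\<in>insert b A. j \<le> i}. (\<mu>(b := w' - w)) j)) \<in> \<int>"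
    if "i \<in> insert b A" for i
  proof (cases "i = b")
    case True
    then show ?thesis
      using w' sum_le_insert_min_self[of "\<mu>(b := w' - w)"] by (simp add: successors_def)
  next
    case False
    then have "i \<in> A" "b \<le> i"
      using that least by (auto intro: less_imp_le)
    moreover have "(\<Sum>j\<in>{j\<in>A. j \<le> i}. (\<mu>(b := w' - w)) j) = (\<Sum>j\<in>{j\<in>A. j \<le> i}. \<mu> j)"
      using \<open>b \<notin> A\<close> by (intro sum.cong) auto
    ultimately show ?thesis
      using \<mu> sum_le_insert_min[OF finite least \<open>b \<le> i\<close>, of "\<mu>(b := w' - w)"]
      by (simp add: lattice_increments_def algebra_simps)
  qed
  ultimately show ?thesis
    by (simp add: lattice_increments_def)
qed

lemma lattice_increments_insert_min:
  "lattice_increments s J (insert b A) w =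
    (\<Union>w'\<in>successors (s b) (b \<in> J) w. (\<lambda>\<mu>. \<mu>(b := w' - w)) ` lattice_increments s J A w')"
proof (intro equalityI subsetI)
  fix \<mu> assume \<mu>: "\<mu> \<in> lattice_increments s J (insert b A) w"
  have "\<mu> = (\<mu>(b := 0))(b := (w + \<mu> b) - w)"
    by simp
  then show "\<mu> \<in> (\<Union>w'\<in>successors (s b) (b \<in> J) w. (\<lambda>\<mu>. \<mu>(b := w' - w)) ` lattice_increments s J A w')"
    using lattice_increments_insert_minD[OF \<mu>] by (intro UN_I image_eqI)
next
  fix \<nu> assume "\<nu> \<in> (\<Union>w'\<in>successors (s b) (b \<in> J) w. (\<lambda>\<mu>. \<mu>(b := w' - w)) ` lattice_increments s J A w')"
  then show "\<nu> \<in> lattice_increments s J (insert b A) w"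
    by (auto intro: lattice_increments_insert_minI)
qed

end

lemma lattice_increments_chain_poly:
  assumes "\<And>i. 0 < s i" "finite A"
  shows "finite (lattice_increments s J A w) \<and>
    (\<Sum>\<mu>\<in>lattice_increments s J A w. height_monom apex (w + sum \<mu> A)) =
      chain_poly apex (map (\<lambda>i. (s i, i \<in> J)) (sorted_list_of_set A)) w"
  using assms(2)
proof (induction A arbitrary: w rule: finite_linorder_min_induct)
  case empty
  then show ?case
    by (simp add: lattice_increments_empty)
next
  case (insert b A)
  let ?S = "successors (s b) (b \<in> J) w"
  let ?upd = "\<lambda>w' \<mu>. \<mu>(b := w' - w)"
  have "b \<notin> A"
    using insert.hyps by blast
  have LI: "lattice_increments s J (insert b A) w = (\<Union>w'\<in>?S. ?upd w' ` lattice_increments s J A w')"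
    by (rule lattice_increments_insert_min[OF insert.hyps])
  have finite_S: "finite ?S"
    using assms(1) by (rule finite_successors)
  have vanish_b: "\<mu> b = 0" if "\<mu> \<in> lattice_increments s J A w'" for \<mu> w'
    using that \<open>b \<notin> A\<close> by (auto simp: lattice_increments_def unit_increments_def dest: spec[of _ b])
  have inj: "inj_on (?upd w') (lattice_increments s J A w')" for w'
    using vanish_b by (intro inj_onI) (metis fun_upd_triv fun_upd_upd)
  have disjoint: "?upd w\<^sub>1 ` lattice_increments s J A w\<^sub>1 \<inter> ?upd w\<^sub>2 ` lattice_increments s J A w\<^sub>2 = {}"
    if "w\<^sub>1 \<noteq> w\<^sub>2" for w\<^sub>1 w\<^sub>2
    using that by (auto dest: fun_cong[of _ _ b])
  have sum_upd: "w + sum (?upd w' \<mu>) (insert b A) = w' + sum \<mu> A" for w' \<mu>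
  proof -
    have "sum (?upd w' \<mu>) A = sum \<mu> A"
      using \<open>b \<notin> A\<close> by (intro sum.cong) auto
    then show ?thesis
      using \<open>b \<notin> A\<close> insert.hyps(1) by simp
  qed
  have "(\<Sum>\<mu>\<in>lattice_increments s J (insert b A) w. height_monom apex (w + sum \<mu> (insert b A))) =
      (\<Sum>w'\<in>?S. \<Sum>\<mu>\<in>?upd w' ` lattice_increments s J A w'. height_monom apex (w + sum \<mu> (insert b A)))"
    unfolding LI using finite_S insert.IH disjoint by (intro sum.UNION_disjoint) auto
  also have "\<dots> = (\<Sum>w'\<in>?S. \<Sum>\<mu>\<in>lattice_increments s J A w'. height_monom apex (w' + sum \<mu> A))"
    by (rule sum.cong[OF refl]) (simp only: sum.reindex[OF inj] comp_def sum_upd)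
  also have "\<dots> = chain_poly apex (map (\<lambda>i. (s i, i \<in> J)) (sorted_list_of_set (insert b A))) w"
    using insert.IH by (simp add: sorted_list_of_set_insert_min[OF insert.hyps])
  finally show ?case
    using finite_S insert.IH by (simp add: LI)
qed

definition apex_offsets :: "bool \<Rightarrow> real set" where
  "apex_offsets apex = (if apex then {0<..<1} else {0})"

lemma apex_heights:
  "{t \<in> apex_offsets apex. w + t \<in> \<int>} =
     (if apex then (if w \<in> \<int> then {} else {of_int \<lfloor>w\<rfloor> + 1 - w}) else (if w \<in> \<int> then {0} else {}))"
proof (cases apex)
  case True
  have "t = of_int \<lfloor>w\<rfloor> + 1 - w \<and> w \<notin> \<int>" if t: "0 < t" "t < 1" "w + t \<in> \<int>" for t
  proof -
    obtain k where k: "w + t = of_int k"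
      using t(3) by (auto elim: Ints_cases)
    then have "\<lfloor>w\<rfloor> = k - 1"
      using t by (intro floor_unique) auto
    moreover have "w \<notin> \<int>"
    proof
      assume "w \<in> \<int>"
      then have "t \<in> \<int>"
        using t(3) by (metis Ints_diff add_diff_cancel_left')
      then show False
        using t(1,2) by (auto elim!: Ints_cases)
    qed
    ultimately show ?thesis
      using k by simp
  qed
  moreover have "0 < of_int \<lfloor>w\<rfloor> + 1 - w" "of_int \<lfloor>w\<rfloor> + 1 - w < 1" if "w \<notin> \<int>"
    using that frac_lt_1[of w] frac_gt_0_iff[of w] by (simp_all add: frac_def)
  ultimately show ?thesis
    using True by (auto simp: apex_offsets_def)
qed (auto simp: apex_offsets_def)

lemma sum_apex_heights:
  assumes "0 \<le> w"
  shows "(\<Sum>t\<in>{t \<in> apex_offsets apex. w + t \<in> \<int>}. monom 1 (nat \<lfloor>w + t\<rfloor>)) = height_monom apex w"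
  using assms by (simp add: apex_heights height_monom_def nat_add_distrib)

lemma lattice_increments_UNIV:
  "lattice_increments s J UNIV 0 = {\<mu> \<in> unit_increments J. \<forall>i. real (s i) * (\<Sum>j\<le>i. \<mu> j) \<in> \<int>}"
  by (simp add: lattice_increments_def atMost_def)

lemma unit_increments_sum:
  fixes f :: "'a::finite \<Rightarrow> 'b::real_vector"
  assumes "\<mu> \<in> unit_increments J"
  shows "(\<Sum>j\<in>UNIV. \<mu> j *\<^sub>R f j) = (\<Sum>j\<in>J. \<mu> j *\<^sub>R f j)" and "sum \<mu> UNIV = sum \<mu> J"
  using assms by (auto simp: unit_increments_def intro!: sum.mono_neutral_right)

lemma unit_increments_sum_nonneg:
  assumes "\<mu> \<in> unit_increments J"
  shows "0 \<le> sum \<mu> A"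
proof (rule sum_nonneg)
  fix j show "0 \<le> \<mu> j"
    using assms unfolding unit_increments_def by (cases "j \<in> J") (auto dest: spec[of _ j])
qed

section \<open>Faces of the lecture hall simplex\<close>

lemma partial_sums_inject:
  fixes \<mu> \<nu> :: "'a::{finite,wellorder} \<Rightarrow> 'b::ab_group_add"
  assumes "\<And>i. (\<Sum>j\<le>i. \<mu> j) = (\<Sum>j\<le>i. \<nu> j)"
  shows "\<mu> = \<nu>"
proof
  fix i show "\<mu> i = \<nu> i"
  proof (induction i rule: less_induct)
    case (less i)
    have "{..i} = insert i {..<i}"
      by auto
    then have "\<mu> i + (\<Sum>j<i. \<mu> j) = \<nu> i + (\<Sum>j<i. \<nu> j)"
      using assms[of i] by simp
    moreover have "(\<Sum>j<i. \<mu> j) = (\<Sum>j<i. \<nu> j)"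
      using less by simp
    ultimately show ?case
      by simp
  qed
qed

lemma mono_imp_partial_sums_on:
  fixes w :: "'a::linorder \<Rightarrow> real"
  assumes "finite A" "mono w" "\<And>i. 0 \<le> w i"
  shows "\<exists>\<mu>. (\<forall>j. 0 \<le> \<mu> j) \<and> (\<forall>i\<in>A. w i = (\<Sum>j\<in>{j\<in>A. j \<le> i}. \<mu> j))"
  using assms(1)
proof (induction A rule: finite_linorder_max_induct)
  case empty
  show ?case by auto
next
  case (insert b A)
  obtain \<mu> where \<mu>: "\<forall>j. 0 \<le> \<mu> j" "\<forall>i\<in>A. w i = (\<Sum>j\<in>{j\<in>A. j \<le> i}. \<mu> j)"
    using insert.IH by blast
  have "b \<notin> A"
    using insert.hyps by blast
  have "sum \<mu> A \<le> w b"
  proof (cases "A = {}")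
    case False
    then have "Max A \<in> A" "{j\<in>A. j \<le> Max A} = A"
      using insert.hyps(1) by auto
    then have "sum \<mu> A = w (Max A)"
      using \<mu>(2) by metis
    also have "\<dots> \<le> w b"
      using \<open>Max A \<in> A\<close> insert.hyps(2) assms(2) by (meson less_imp_le monoD)
    finally show ?thesis .
  qed (simp add: assms(3))
  define \<mu>' where "\<mu>' = \<mu>(b := w b - sum \<mu> A)"
  have "w i = (\<Sum>j\<in>{j\<in>insert b A. j \<le> i}. \<mu>' j)" if "i \<in> insert b A" for i
  proof (cases "i = b")
    case True
    have "{j\<in>insert b A. j \<le> b} = insert b A"
      using insert.hyps by auto
    moreover have "sum \<mu>' A = sum \<mu> A"
      using \<open>b \<notin> A\<close> by (auto simp: \<mu>'_def intro!: sum.cong)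
    ultimately show ?thesis
      using True \<open>b \<notin> A\<close> insert.hyps(1) by (simp add: \<mu>'_def)
  next
    case False
    then have "i \<in> A" "{j\<in>insert b A. j \<le> i} = {j\<in>A. j \<le> i}"
      using that insert.hyps by auto
    moreover have "sum \<mu>' {j\<in>A. j \<le> i} = sum \<mu> {j\<in>A. j \<le> i}"
      using \<open>b \<notin> A\<close> by (auto simp: \<mu>'_def intro!: sum.cong)
    ultimately show ?thesis
      using \<mu>(2) by simp
  qed
  moreover have "\<forall>j. 0 \<le> \<mu>' j"
    using \<mu>(1) \<open>sum \<mu> A \<le> w b\<close> by (simp add: \<mu>'_def)
  ultimately show ?case
    by blast
qed

lemma mono_imp_partial_sums:
  fixes w :: "'a::{finite,linorder} \<Rightarrow> real"
  assumes "mono w" "\<And>i. 0 \<le> w i"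
  shows "\<exists>\<mu>. (\<forall>j. 0 \<le> \<mu> j) \<and> (\<forall>i. w i = (\<Sum>j\<le>i. \<mu> j))"
  using mono_imp_partial_sums_on[of UNIV w] assms by (simp add: atMost_def)

lemma convex_hull_insert_0_range:
  fixes f :: "'a::finite \<Rightarrow> 'b::real_vector"
  assumes "inj f" "0 \<notin> range f"
  shows "convex hull (insert 0 (range f)) =
    {\<Sum>j\<in>UNIV. \<mu> j *\<^sub>R f j | \<mu>. (\<forall>j. 0 \<le> \<mu> j) \<and> sum \<mu> UNIV \<le> 1}"
proof -
  have reindex: "(\<Sum>y\<in>range f. g y) = (\<Sum>j\<in>UNIV. g (f j))" for g :: "'b \<Rightarrow> 'c::comm_monoid_add"
    using assms(1) by (simp add: sum.reindex)
  show ?thesis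
    unfolding Starlike.simplex[OF finite_imageI[OF finite] assms(2)] reindex
  proof safe
    fix u :: "'b \<Rightarrow> real" assume "\<forall>y\<in>range f. 0 \<le> u y" "(\<Sum>j\<in>UNIV. u (f j)) \<le> 1"
    then show "\<exists>\<mu>. (\<Sum>j\<in>UNIV. u (f j) *\<^sub>R f j) = (\<Sum>j\<in>UNIV. \<mu> j *\<^sub>R f j) \<and> (\<forall>j. 0 \<le> \<mu> j) \<and> sum \<mu> UNIV \<le> 1"
      by (intro exI[of _ "u \<circ> f"]) auto
  next
    fix \<mu> :: "'a \<Rightarrow> real" assume "\<forall>j. 0 \<le> \<mu> j" "sum \<mu> UNIV \<le> 1"
    then show "\<exists>u. (\<forall>y\<in>range f. 0 \<le> u y) \<and> (\<Sum>j\<in>UNIV. u (f j)) \<le> 1 \<and> (\<Sum>j\<in>UNIV. u (f j) *\<^sub>R f j) = (\<Sum>j\<in>UNIV. \<mu> j *\<^sub>R f j)"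
      using assms(1) by (intro exI[of _ "\<mu> \<circ> inv f"]) auto
  qed
qed

definition lhs_vertex :: "('n::{finite,wellorder} \<Rightarrow> nat) \<Rightarrow> 'n \<Rightarrow> real^'n::{finite,wellorder}" where
  "lhs_vertex s j = (\<chi> i. if j \<le> i then real (s i) else 0)"

lemma lhs_vertex_sum_nth:
  "(\<Sum>j\<in>UNIV. \<mu> j *\<^sub>R lhs_vertex s j) $ i = real (s i) * (\<Sum>j\<le>i. \<mu> j)"
proof -
  have "(\<Sum>j\<in>UNIV. \<mu> j *\<^sub>R lhs_vertex s j) $ i = (\<Sum>j\<in>UNIV. if j \<le> i then real (s i) * \<mu> j else 0)"
    by (simp add: lhs_vertex_def if_distrib mult.commute cong: if_cong)
  also have "\<dots> = real (s i) * (\<Sum>j\<le>i. \<mu> j)"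
    by (simp add: sum.If_cases sum_distrib_left atMost_def)
  finally show ?thesis .
qed

definition lhs_face_vertices ::
    "('n::{finite,wellorder} \<Rightarrow> nat) \<Rightarrow> 'n set \<Rightarrow> bool \<Rightarrow> (real^'n::{finite,wellorder}) set" where
  "lhs_face_vertices s J apex = lhs_vertex s ` J \<union> (if apex then {0} else {})"

text \<open>The point of the cone over the lecture hall simplex with coefficient \<open>\<mu> j\<close> on the vertex
  \<open>lhs_vertex s j\<close> and \<open>t\<close> on the vertex \<open>0\<close>; its last coordinate is the height.\<close>
definition cone_point ::
    "('n::{finite,wellorder} \<Rightarrow> nat) \<Rightarrow> ('n \<Rightarrow> real) \<times> real \<Rightarrow> (real^'n::{finite,wellorder}) \<times> real" where
  "cone_point s = (\<lambda>(\<mu>, t). (\<Sum>j\<in>UNIV. \<mu> j *\<^sub>R lhs_vertex s j, sum \<mu> UNIV + t))"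

context
  fixes s :: "'n::{finite,wellorder} \<Rightarrow> nat"
  assumes s_pos: "\<And>i. 0 < s i"
begin

lemma lhs_vertex_neq_0: "lhs_vertex s j \<noteq> 0"
proof
  assume "lhs_vertex s j = 0"
  then have "lhs_vertex s j $ j = 0" by simp
  then show False using s_pos[of j] by (simp add: lhs_vertex_def)
qed

lemma inj_lhs_vertex: "inj (lhs_vertex s)"
proof (rule injI)
  fix a b assume eq: "lhs_vertex s a = lhs_vertex s b"
  have "\<not> a < b" "\<not> b < a"
    using arg_cong[OF eq, of "\<lambda>v. v $ a"] arg_cong[OF eq, of "\<lambda>v. v $ b"] s_pos[of a] s_pos[of b]
    by (auto simp: lhs_vertex_def split: if_splits dest: leD)
  then show "a = b" by simp
qed

lemma affine_independent_lhs_vertices: "\<not> affine_dependent (insert 0 (range (lhs_vertex s)))"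
proof -
  have "\<not> dependent (range (lhs_vertex s))"
  proof
    assume "dependent (range (lhs_vertex s))"
    then obtain u where u: "\<exists>v\<in>range (lhs_vertex s). u v \<noteq> 0" "(\<Sum>v\<in>range (lhs_vertex s). u v *\<^sub>R v) = 0"
      using dependent_finite[of "range (lhs_vertex s)"] by auto
    have zero: "(\<Sum>j\<in>UNIV. u (lhs_vertex s j) *\<^sub>R lhs_vertex s j) = 0"
      using u(2) inj_lhs_vertex by (simp add: sum.reindex)
    have "(\<Sum>j\<le>i. u (lhs_vertex s j)) = (\<Sum>j\<le>i. 0)" for i
    proof -
      have "real (s i) * (\<Sum>j\<le>i. u (lhs_vertex s j)) = 0"
        using arg_cong[OF zero, of "\<lambda>v. v $ i"] unfolding lhs_vertex_sum_nth by simp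
      then show ?thesis
        using s_pos[of i] by simp
    qed
    then have "(\<lambda>j. u (lhs_vertex s j)) = (\<lambda>j. 0)"
      by (rule partial_sums_inject)
    then show False
      using u(1) by (auto dest: fun_cong)
  qed
  moreover have "0 \<notin> range (lhs_vertex s)"
    using lhs_vertex_neq_0 by auto
  ultimately show ?thesis
    by (simp add: affine_dependent_iff_dependent)
qed

lemma lecture_hall_simplex_eq_convex_hull:
  "lecture_hall_simplex s = convex hull (insert 0 (range (lhs_vertex s)))"
proof -
  have "x \<in> lecture_hall_simplex s \<longleftrightarrow>
      (\<exists>\<mu>. (\<forall>j. 0 \<le> \<mu> j) \<and> sum \<mu> UNIV \<le> 1 \<and> x = (\<Sum>j\<in>UNIV. \<mu> j *\<^sub>R lhs_vertex s j))" for x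
  proof
    assume x: "x \<in> lecture_hall_simplex s"
    define w where "w i = x $ i / real (s i)" for i
    have "mono w" "\<And>i. 0 \<le> w i" "\<And>i. w i \<le> 1"
      using x by (auto simp: lecture_hall_simplex_def w_def intro: monoI)
    then obtain \<mu> where \<mu>: "\<forall>j. 0 \<le> \<mu> j" "\<forall>i. w i = (\<Sum>j\<le>i. \<mu> j)"
      using mono_imp_partial_sums by blast
    have "sum \<mu> UNIV = w (Max UNIV)"
      using \<mu>(2) by (simp add: atMost_def)
    moreover have "x = (\<Sum>j\<in>UNIV. \<mu> j *\<^sub>R lhs_vertex s j)"
      unfolding vec_eq_iff lhs_vertex_sum_nth using \<mu>(2) s_pos by (simp add: w_def field_simps)
    ultimately show "\<exists>\<mu>. (\<forall>j. 0 \<le> \<mu> j) \<and> sum \<mu> UNIV \<le> 1 \<and> x = (\<Sum>j\<in>UNIV. \<mu> j *\<^sub>R lhs_vertex s j)"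
      using \<mu>(1) \<open>\<And>i. w i \<le> 1\<close> by metis
  next
    assume "\<exists>\<mu>. (\<forall>j. 0 \<le> \<mu> j) \<and> sum \<mu> UNIV \<le> 1 \<and> x = (\<Sum>j\<in>UNIV. \<mu> j *\<^sub>R lhs_vertex s j)"
    then obtain \<mu> where \<mu>: "\<forall>j. 0 \<le> \<mu> j" "sum \<mu> UNIV \<le> 1" and x: "x = (\<Sum>j\<in>UNIV. \<mu> j *\<^sub>R lhs_vertex s j)"
      by blast
    have "x $ i / real (s i) = (\<Sum>j\<le>i. \<mu> j)" for i
      using s_pos[of i] unfolding x lhs_vertex_sum_nth by simp
    moreover have "(\<Sum>j\<le>i. \<mu> j) \<le> (\<Sum>j\<le>i'. \<mu> j)" if "i \<le> i'" for i i'
      using \<mu>(1) that by (intro sum_mono2) auto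
    moreover have "(\<Sum>j\<le>i. \<mu> j) \<le> 1" for i
      using \<mu> sum_mono2[of UNIV "{..i}" \<mu>] by simp
    ultimately show "x \<in> lecture_hall_simplex s"
      using \<mu>(1) by (auto simp: lecture_hall_simplex_def intro: sum_nonneg)
  qed
  moreover have "0 \<notin> range (lhs_vertex s)"
    using lhs_vertex_neq_0 by auto
  ultimately show ?thesis
    by (subst convex_hull_insert_0_range[OF inj_lhs_vertex]) blast+
qed

lemma sum_lhs_face_vertices:
  "(\<Sum>x\<in>lhs_face_vertices s J apex. f x) = (\<Sum>j\<in>J. f (lhs_vertex s j)) + (if apex then f 0 else 0)"
proof -
  have "0 \<notin> lhs_vertex s ` J"
    using lhs_vertex_neq_0 by auto
  then have "(\<Sum>x\<in>lhs_face_vertices s J apex. f x) = (\<Sum>x\<in>lhs_vertex s ` J. f x) + (if apex then f 0 else 0)"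
    unfolding lhs_face_vertices_def by (subst sum.union_disjoint) auto
  also have "(\<Sum>x\<in>lhs_vertex s ` J. f x) = (\<Sum>j\<in>J. f (lhs_vertex s j))"
    using inj_lhs_vertex by (simp add: sum.reindex inj_on_subset)
  finally show ?thesis .
qed

lemma vertices_of_face_lecture_hall_simplex:
  assumes "F face_of lecture_hall_simplex s"
  shows "\<exists>J apex. vertices_of F = lhs_face_vertices s J apex"
proof -
  let ?V = "insert 0 (range (lhs_vertex s))"
  obtain c where c: "c \<subseteq> ?V" "F = convex hull c"
    using assms face_of_convex_hull_affine_independent[OF affine_independent_lhs_vertices]
    unfolding lecture_hall_simplex_eq_convex_hull by blast
  then have "\<not> affine_dependent c"
    using affine_dependent_subset affine_independent_lhs_vertices by blast
  then have "vertices_of F = c"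
    unfolding vertices_of_def c(2) by (simp add: extreme_point_of_convex_hull_affine_independent)
  also have "c = lhs_face_vertices s {j. lhs_vertex s j \<in> c} (0 \<in> c)"
    using c(1) by (auto simp: lhs_face_vertices_def)
  finally show ?thesis
    by blast
qed

lemma inj_cone_point: "inj (cone_point s)"
proof (rule injI, clarsimp simp: cone_point_def)
  fix \<mu> t \<mu>' t'
  assume eq: "(\<Sum>j\<in>UNIV. \<mu> j *\<^sub>R lhs_vertex s j) = (\<Sum>j\<in>UNIV. \<mu>' j *\<^sub>R lhs_vertex s j)"
    and "sum \<mu> UNIV + t = sum \<mu>' UNIV + t'"
  have "(\<Sum>j\<le>i. \<mu> j) = (\<Sum>j\<le>i. \<mu>' j)" for i
    using arg_cong[OF eq, of "\<lambda>v. v $ i"] s_pos[of i] unfolding lhs_vertex_sum_nth by simp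
  then have "\<mu> = \<mu>'"
    by (rule partial_sums_inject)
  with \<open>sum \<mu> UNIV + t = sum \<mu>' UNIV + t'\<close> show "\<mu> = \<mu>' \<and> t = t'"
    by simp
qed

lemma open_parallelepiped_lhs_face:
  "open_parallelepiped (lhs_face_vertices s J apex) = cone_point s ` (unit_increments J \<times> apex_offsets apex)"
proof (intro equalityI subsetI)
  fix p assume "p \<in> open_parallelepiped (lhs_face_vertices s J apex)"
  then obtain l where l: "\<forall>x\<in>lhs_face_vertices s J apex. 0 < l x \<and> l x < 1"
    and p: "p = (\<Sum>x\<in>lhs_face_vertices s J apex. l x *\<^sub>R x, \<Sum>x\<in>lhs_face_vertices s J apex. l x)"
    unfolding open_parallelepiped_def by blast
  define \<mu> where "\<mu> j = (if j \<in> J then l (lhs_vertex s j) else 0)" for j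
  define t where "t = (if apex then l 0 else 0)"
  have \<mu>: "\<mu> \<in> unit_increments J" and t: "t \<in> apex_offsets apex"
    using l by (auto simp: \<mu>_def t_def unit_increments_def apex_offsets_def lhs_face_vertices_def)
  have "(\<Sum>j\<in>J. \<mu> j *\<^sub>R lhs_vertex s j) = (\<Sum>j\<in>J. l (lhs_vertex s j) *\<^sub>R lhs_vertex s j)"
    "(\<Sum>j\<in>J. \<mu> j) = (\<Sum>j\<in>J. l (lhs_vertex s j))"
    by (auto simp: \<mu>_def intro!: sum.cong)
  then have "p = cone_point s (\<mu>, t)"
    unfolding p sum_lhs_face_vertices by (simp add: cone_point_def unit_increments_sum[OF \<mu>] t_def)
  then show "p \<in> cone_point s ` (unit_increments J \<times> apex_offsets apex)"
    using \<mu> t by blast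
next
  fix p assume "p \<in> cone_point s ` (unit_increments J \<times> apex_offsets apex)"
  then obtain \<mu> t where \<mu>: "\<mu> \<in> unit_increments J" and t: "t \<in> apex_offsets apex"
    and p: "p = cone_point s (\<mu>, t)"
    by blast
  define l where "l x = (if x = 0 then t else \<mu> (inv (lhs_vertex s) x))" for x
  have l_vertex: "l (lhs_vertex s j) = \<mu> j" for j
    using lhs_vertex_neq_0 inv_f_f[OF inj_lhs_vertex] by (simp add: l_def)
  have l_0: "l 0 = t"
    by (simp add: l_def)
  have "\<forall>x\<in>lhs_face_vertices s J apex. 0 < l x \<and> l x < 1"
    using \<mu> t by (auto simp: lhs_face_vertices_def l_vertex l_0 unit_increments_def apex_offsets_def
        split: if_splits)
  moreover have "p = (\<Sum>x\<in>lhs_face_vertices s J apex. l x *\<^sub>R x, \<Sum>x\<in>lhs_face_vertices s J apex. l x)"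
    using t unfolding p sum_lhs_face_vertices
    by (auto simp: cone_point_def unit_increments_sum[OF \<mu>] l_vertex l_0 apex_offsets_def)
  ultimately show "p \<in> open_parallelepiped (lhs_face_vertices s J apex)"
    unfolding open_parallelepiped_def by blast
qed

lemma lattice_points_open_par_lhs_face:
  "lattice_points_open_par (lhs_face_vertices s J apex) =
    cone_point s ` (SIGMA \<mu>:lattice_increments s J UNIV 0. {t \<in> apex_offsets apex. sum \<mu> UNIV + t \<in> \<int>})"
proof -
  have "{x \<in> unit_increments J \<times> apex_offsets apex.
      (\<forall>i. fst (cone_point s x) $ i \<in> \<int>) \<and> snd (cone_point s x) \<in> \<int>} =
      (SIGMA \<mu>:lattice_increments s J UNIV 0. {t \<in> apex_offsets apex. sum \<mu> UNIV + t \<in> \<int>})"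
    by (auto simp: cone_point_def lattice_increments_UNIV lhs_vertex_sum_nth simp del: sum_component)
  moreover have "{p \<in> cone_point s ` D. Q p} = cone_point s ` {x \<in> D. Q (cone_point s x)}" for D Q
    by blast
  ultimately show ?thesis
    unfolding lattice_points_open_par_def open_parallelepiped_lhs_face by simp
qed

lemma local_hstar_lhs_face:
  assumes "vertices_of F = lhs_face_vertices s J apex"
  shows "local_hstar F = chain_poly apex (map (\<lambda>i. (s i, i \<in> J)) (sorted_list_of_set UNIV)) 0"
proof -
  let ?M = "lattice_increments s J UNIV 0"
  let ?T = "\<lambda>\<mu>. {t \<in> apex_offsets apex. sum \<mu> UNIV + t \<in> \<int>}"
  have M: "finite ?M \<and> (\<Sum>\<mu>\<in>?M. height_monom apex (0 + sum \<mu> UNIV)) =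
      chain_poly apex (map (\<lambda>i. (s i, i \<in> J)) (sorted_list_of_set UNIV)) 0"
    by (rule lattice_increments_chain_poly[OF s_pos finite])
  have "local_hstar F = (\<Sum>(\<mu>, t)\<in>Sigma ?M ?T. monom 1 (nat \<lfloor>sum \<mu> UNIV + t\<rfloor>))"
    unfolding local_hstar_def assms lattice_points_open_par_lhs_face
      sum.reindex[OF inj_on_subset[OF inj_cone_point subset_UNIV]]
    by (simp add: cone_point_def case_prod_beta)
  also have "\<dots> = (\<Sum>\<mu>\<in>?M. \<Sum>t\<in>?T \<mu>. monom 1 (nat \<lfloor>sum \<mu> UNIV + t\<rfloor>))"
    using M by (subst sum.Sigma) (auto simp: apex_heights)
  also have "\<dots> = (\<Sum>\<mu>\<in>?M. height_monom apex (sum \<mu> UNIV))"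
    by (intro sum.cong refl sum_apex_heights)
      (auto simp: lattice_increments_UNIV intro: unit_increments_sum_nonneg)
  finally show ?thesis
    using M by simp
qed

end

theorem corollary5p6:
  fixes s :: "'n::{finite,wellorder} \<Rightarrow> nat" and F :: "(real^'n::{finite,wellorder}) set"
  assumes "\<forall>i. 0 < s i"
    and "F face_of lecture_hall_simplex s"
    and "F \<noteq> {}"
  shows "real_rooted (local_hstar F) \<and> unimodal_poly (local_hstar F)"
proof -
  have s_pos: "\<And>i. 0 < s i"
    using assms(1) by blast
  obtain J apex where "vertices_of F = lhs_face_vertices s J apex"
    using vertices_of_face_lecture_hall_simplex[OF s_pos assms(2)] by blast
  then have hstar: "local_hstar F = chain_poly apex (map (\<lambda>i. (s i, i \<in> J)) (sorted_list_of_set UNIV)) 0"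
    by (rule local_hstar_lhs_face[OF s_pos])
  have "real_rooted (local_hstar F)"
    unfolding hstar using s_pos by (intro real_rooted_chain_poly) auto
  moreover have "0 \<le> coeff (local_hstar F) i" for i
    unfolding local_hstar_def by (auto simp: coeff_sum coeff_monom intro!: sum_nonneg)
  ultimately show ?thesis
    using real_rooted_nonneg_coeffs_imp_unimodal by blast
qed

end
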